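(* If $\mathcal{E}\subseteq \mathcal{P}(S)$ is a self-dissecting collection of sets, then $\mathfrak{H}(\mathcal{E})= \mathcal{C}(\mathcal{E})$.
   Context: $C(S)$ is the set of countable subsets of a set $S$; for $A\subseteq S$, $N_A:C(S)\to\mathbb{N}_0\cup\{\infty\}$, $M\mapsto|A\cap M|$. For nonempty $\mathcal{T}\subseteq\mathcal{P}(S)$: $\mathcal{C}(\mathcal{T})=\sigma(N_A\mid A\in\mathcal{T})$ and $\mathfrak{H}(\mathcal{T})=\sigma(\{N_A\neq0\}\mid A\in\mathcal{T})$, both $\sigma$-fields on $C(S)$. Dissecting system for $A\subseteq S$: families $\{A_{n,k}\mid k\in I_n\}$, $I_n\subseteq\mathbb{N}$, $n\in\mathbb{N}$, such that (i) for each $n$ the $A_{n,k}$ are pairwise disjoint, $\bigcup_{k\in I_n}A_{n,k}\subseteq\bigcup_{k\in I_{n+1}}A_{n+1,k}\subseteq A$ and $\bigcup_{n,k}A_{n,k}=A$; (ii) for distinct $x,y\in A$ there is $n(x,y)$ such that for all $n\ge n(x,y)$ some $A_{n,k}$ contains exactly one of $x,y$. A nonempty $\mathcal{E}\subseteq\mathcal{P}(S)$ is self-dissecting if each $A\in\mathcal{E}$ has a dissecting system with all $A_{n,k}\in\mathcal{E}$. *)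

theory Defs
  imports "HOL-Analysis.Analysis"
begin

definition Csets :: "'a set \<Rightarrow> 'a set set" where
  "Csets S = {M. M \<subseteq> S \<and> countable M}"

definition Ncount :: "'a set \<Rightarrow> 'a set \<Rightarrow> enat" where
  "Ncount A M = (if finite (A \<inter> M) then enat (card (A \<inter> M)) else \<infinity>)"

text \<open>\<C>(T) = \<sigma>(N_A | A \<in> T): generated by all preimages N_A^{-1}(B), B \<subseteq> N_0 \<union> {\<infinity>}
  (the value space carries its power set, i.e. it is discrete).\<close>
definition CC :: "'a set \<Rightarrow> 'a set set \<Rightarrow> 'a set set set" where
  "CC S T = sigma_sets (Csets S)
     {{M \<in> Csets S. Ncount A M \<in> B} | A B. A \<in> T}"

definition HH :: "'a set \<Rightarrow> 'a set set \<Rightarrow> 'a set set set" where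
  "HH S T = sigma_sets (Csets S) {{M \<in> Csets S. Ncount A M \<noteq> 0} | A. A \<in> T}"

definition dissecting_system :: "'a set \<Rightarrow> (nat \<Rightarrow> nat set) \<Rightarrow> (nat \<Rightarrow> nat \<Rightarrow> 'a set) \<Rightarrow> bool" where
  "dissecting_system A I D \<longleftrightarrow>
     (\<forall>n. disjoint_family_on (D n) (I n)) \<and>
     (\<forall>n. (\<Union>k\<in>I n. D n k) \<subseteq> (\<Union>k\<in>I (Suc n). D (Suc n) k)) \<and>
     (\<forall>n. (\<Union>k\<in>I n. D n k) \<subseteq> A) \<and>
     (\<Union>n. \<Union>k\<in>I n. D n k) = A \<and>
     (\<forall>x\<in>A. \<forall>y\<in>A. x \<noteq> y \<longrightarrow>
        (\<exists>n0. \<forall>n\<ge>n0. \<exists>k\<in>I n. (x \<in> D n k) \<noteq> (y \<in> D n k)))"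

definition self_dissecting :: "'a set set \<Rightarrow> bool" where
  "self_dissecting E \<longleftrightarrow> E \<noteq> {} \<and>
     (\<forall>A\<in>E. \<exists>I D. dissecting_system A I D \<and> (\<forall>n. \<forall>k\<in>I n. D n k \<in> E))"

end

theory Submission
  imports Defs
begin

(*
  Trivially H(E) \<subseteq> C(E), since {N_A \<noteq> 0} is a preimage under N_A.
  For the converse it suffices (N_A takes values in the countable set N_0 \<union> {\<infinity>}) to
  show that every level set {N_A \<ge> j} with A \<in> E lies in H(E): indeed
  {N_A = j} = {N_A \<ge> j} - {N_A \<ge> j+1} and {N_A = \<infinity>} = \<Inter>_j {N_A \<ge> j}.
  Take a dissecting system (D n k) of A inside E.  A countable set M meets A in at
  least j points iff, for some n, at least j distinct cells D n k meet M: finitely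
  many points of A are eventually covered by and separated into distinct cells of
  one level n, and conversely points chosen in distinct (disjoint) cells are
  distinct.  Hence {N_A \<ge> j} is a countable union of finite intersections of
  generators {N_{D n k} \<noteq> 0} of H(E).
*)

lemma Ncount_ge:
  "enat j \<le> Ncount A M \<longleftrightarrow> (\<exists>F. finite F \<and> card F = j \<and> F \<subseteq> A \<inter> M)"
proof (cases "finite (A \<inter> M)")
  case True
  show ?thesis
  proof
    assume "enat j \<le> Ncount A M"
    then have "j \<le> card (A \<inter> M)" using True by (simp add: Ncount_def)
    then obtain F where "F \<subseteq> A \<inter> M" "card F = j" "finite F"
      by (rule obtain_subset_with_card_n)
    then show "\<exists>F. finite F \<and> card F = j \<and> F \<subseteq> A \<inter> M" by blast
  next
    assume "\<exists>F. finite F \<and> card F = j \<and> F \<subseteq> A \<inter> M"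
    then have "j \<le> card (A \<inter> M)" using True card_mono by blast
    then show "enat j \<le> Ncount A M" using True by (simp add: Ncount_def)
  qed
next
  case False
  then show ?thesis using infinite_arbitrarily_large[OF False] by (simp add: Ncount_def)
qed

lemma Ncount_ne0: "Ncount A M \<noteq> 0 \<longleftrightarrow> A \<inter> M \<noteq> {}"
  by (auto simp: Ncount_def zero_enat_def)

text \<open>A map into the countable set of extended naturals is measurable as soon as all
  its upper level sets are: the fibres are differences resp. intersections of them.\<close>
lemma (in sigma_algebra) enat_preimage_from_level_sets:
  fixes f :: "'a \<Rightarrow> enat"
  assumes level: "\<And>j. {x \<in> \<Omega>. enat j \<le> f x} \<in> M"
  shows "{x \<in> \<Omega>. f x \<in> B} \<in> M"
proof -
  have fibre_finite: "{x \<in> \<Omega>. f x = enat j} \<in> M" for j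
  proof -
    have "v = enat j \<longleftrightarrow> enat j \<le> v \<and> \<not> enat (Suc j) \<le> v" for v :: enat
      by (cases v) auto
    then have "{x \<in> \<Omega>. f x = enat j} =
        {x \<in> \<Omega>. enat j \<le> f x} - {x \<in> \<Omega>. enat (Suc j) \<le> f x}"
      by blast
    then show ?thesis using level by auto
  qed
  have fibre_infinite: "{x \<in> \<Omega>. f x = \<infinity>} \<in> M"
  proof -
    have "v = \<infinity> \<longleftrightarrow> (\<forall>j. enat j \<le> v)" for v :: enat
      by (cases v) (auto intro: exI[of _ "Suc (the_enat v)"])
    then have "{x \<in> \<Omega>. f x = \<infinity>} = (\<Inter>j. {x \<in> \<Omega>. enat j \<le> f x})"
      by blast
    then show ?thesis using level by auto
  qed
  have "{x \<in> \<Omega>. f x = v} \<in> M" for v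
    using fibre_finite fibre_infinite by (cases v) auto
  then have "(\<Union>v\<in>B. {x \<in> \<Omega>. f x = v}) \<in> M" by blast
  moreover have "{x \<in> \<Omega>. f x \<in> B} = (\<Union>v\<in>B. {x \<in> \<Omega>. f x = v})" by blast
  ultimately show ?thesis by simp
qed

lemma
  assumes "dissecting_system A I D"
  shows dissecting_disjoint: "disjoint_family_on (D n) (I n)"
    and dissecting_level_step: "(\<Union>k\<in>I n. D n k) \<subseteq> (\<Union>k\<in>I (Suc n). D (Suc n) k)"
    and dissecting_level_subset: "(\<Union>k\<in>I n. D n k) \<subseteq> A"
    and dissecting_exhausts: "(\<Union>n. \<Union>k\<in>I n. D n k) = A"
  using assms unfolding dissecting_system_def by simp_all

lemma dissecting_eventually_separates:
  assumes "dissecting_system A I D" "x \<in> A" "y \<in> A" "x \<noteq> y"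
  shows "eventually (\<lambda>n. \<exists>k\<in>I n. (x \<in> D n k) \<noteq> (y \<in> D n k)) sequentially"
proof -
  have "\<forall>x\<in>A. \<forall>y\<in>A. x \<noteq> y \<longrightarrow> (\<exists>n0. \<forall>n\<ge>n0. \<exists>k\<in>I n. (x \<in> D n k) \<noteq> (y \<in> D n k))"
    using assms(1) unfolding dissecting_system_def by (elim conjE)
  then show ?thesis
    using assms(2-4) unfolding eventually_sequentially by blast
qed

text \<open>Since the levels increase and exhaust A, every point of A is eventually covered.\<close>
lemma dissecting_eventually_covers:
  assumes ds: "dissecting_system A I D" and "x \<in> A"
  shows "eventually (\<lambda>n. \<exists>k\<in>I n. x \<in> D n k) sequentially"
proof -
  obtain m where m: "x \<in> (\<Union>k\<in>I m. D m k)"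
    using dissecting_exhausts[OF ds] \<open>x \<in> A\<close> by blast
  have "x \<in> (\<Union>k\<in>I n. D n k)" if "m \<le> n" for n
    using lift_Suc_mono_le[where f = "\<lambda>n. \<Union>k\<in>I n. D n k", OF dissecting_level_step[OF ds] that] m
    by blast
  then show ?thesis
    unfolding eventually_sequentially by blast
qed

lemma disjoint_family_on_cell_unique:
  assumes "disjoint_family_on D I" "k \<in> I" "l \<in> I" "x \<in> D k" "x \<in> D l"
  shows "k = l"
  using assms unfolding disjoint_family_on_def by blast

lemma dissecting_finite_injection:
  assumes ds: "dissecting_system A I D" and F: "finite F" "F \<subseteq> A"
  obtains n g where "\<And>x. x \<in> F \<Longrightarrow> g x \<in> I n \<and> x \<in> D n (g x)" "inj_on g F"
proof -
  define good where "good n x \<longleftrightarrow> (\<exists>k\<in>I n. x \<in> D n k) \<and>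
      (\<forall>y\<in>F. x \<noteq> y \<longrightarrow> (\<exists>k\<in>I n. (x \<in> D n k) \<noteq> (y \<in> D n k)))" for n x
  have "eventually (\<lambda>n. good n x) sequentially" if "x \<in> F" for x
  proof -
    have "x \<in> A" using that F by blast
    have "eventually (\<lambda>n. \<forall>y\<in>F. x \<noteq> y \<longrightarrow> (\<exists>k\<in>I n. (x \<in> D n k) \<noteq> (y \<in> D n k)))
        sequentially"
    proof (intro eventually_ball_finite[OF \<open>finite F\<close>] ballI)
      fix y assume "y \<in> F"
      then show "eventually (\<lambda>n. x \<noteq> y \<longrightarrow> (\<exists>k\<in>I n. (x \<in> D n k) \<noteq> (y \<in> D n k))) sequentially"
        using dissecting_eventually_separates[OF ds \<open>x \<in> A\<close>, of y] F
        by (cases "x = y") (auto elim: eventually_mono)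
    qed
    then show ?thesis
      unfolding good_def using eventually_conj dissecting_eventually_covers[OF ds \<open>x \<in> A\<close>] by blast
  qed
  then have "eventually (\<lambda>n. \<forall>x\<in>F. good n x) sequentially"
    by (intro eventually_ball_finite[OF \<open>finite F\<close>] ballI)
  then obtain n where "\<And>x. x \<in> F \<Longrightarrow> good n x"
    unfolding eventually_sequentially by blast
  then have cover: "\<And>x. x \<in> F \<Longrightarrow> \<exists>k\<in>I n. x \<in> D n k"
    and split: "\<And>x y. x \<in> F \<Longrightarrow> y \<in> F \<Longrightarrow> x \<noteq> y \<Longrightarrow> \<exists>k\<in>I n. (x \<in> D n k) \<noteq> (y \<in> D n k)"
    unfolding good_def by blast+
  obtain g where g: "\<And>x. x \<in> F \<Longrightarrow> g x \<in> I n \<and> x \<in> D n (g x)"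
    using cover by metis
  have "inj_on g F"
  proof (rule inj_onI, rule ccontr)
    fix x y assume "x \<in> F" "y \<in> F" "g x = g y" "x \<noteq> y"
    then obtain k where k: "k \<in> I n" "(x \<in> D n k) \<noteq> (y \<in> D n k)"
      using split by blast
    have "x \<in> D n (g x)" "y \<in> D n (g x)" "g x \<in> I n"
      using g \<open>x \<in> F\<close> \<open>y \<in> F\<close> \<open>g x = g y\<close> by metis+
    then show False
      using k disjoint_family_on_cell_unique[OF dissecting_disjoint[OF ds]] by metis
  qed
  then show thesis using that g by blast
qed

lemma dissecting_Ncount_ge:
  assumes ds: "dissecting_system A I D"
  shows "enat j \<le> Ncount A M \<longleftrightarrow>
    (\<exists>n K. finite K \<and> K \<subseteq> I n \<and> card K = j \<and> (\<forall>k\<in>K. Ncount (D n k) M \<noteq> 0))"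
proof
  assume "enat j \<le> Ncount A M"
  then obtain F where F: "finite F" "card F = j" "F \<subseteq> A \<inter> M"
    unfolding Ncount_ge by blast
  have "F \<subseteq> A" using F(3) by blast
  then obtain n g where g: "\<And>x. x \<in> F \<Longrightarrow> g x \<in> I n \<and> x \<in> D n (g x)" and "inj_on g F"
    using dissecting_finite_injection[OF ds F(1)] by metis
  have "card (g ` F) = j"
    using \<open>inj_on g F\<close> F(2) by (simp add: card_image)
  moreover have "g ` F \<subseteq> I n"
    using g by blast
  moreover have "\<forall>k\<in>g ` F. Ncount (D n k) M \<noteq> 0"
    using g F(3) by (auto simp: Ncount_ne0)
  ultimately show "\<exists>n K. finite K \<and> K \<subseteq> I n \<and> card K = j \<and> (\<forall>k\<in>K. Ncount (D n k) M \<noteq> 0)"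
    using F(1) by blast
next
  assume "\<exists>n K. finite K \<and> K \<subseteq> I n \<and> card K = j \<and> (\<forall>k\<in>K. Ncount (D n k) M \<noteq> 0)"
  then obtain n K where K: "finite K" "K \<subseteq> I n" "card K = j"
    and meets: "\<forall>k\<in>K. Ncount (D n k) M \<noteq> 0"
    by blast
  have "\<forall>k\<in>K. \<exists>y. y \<in> D n k \<inter> M"
    using meets by (auto simp: Ncount_ne0)
  then obtain x where x: "\<And>k. k \<in> K \<Longrightarrow> x k \<in> D n k \<inter> M"
    by metis
  have "inj_on x K"
  proof (rule inj_onI)
    fix k l assume "k \<in> K" "l \<in> K" "x k = x l"
    then have "x k \<in> D n k" "x k \<in> D n l" "k \<in> I n" "l \<in> I n"
      using x[OF \<open>k \<in> K\<close>] x[OF \<open>l \<in> K\<close>] K(2) by auto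
    then show "k = l"
      by (meson disjoint_family_on_cell_unique dissecting_disjoint[OF ds])
  qed
  then have "card (x ` K) = j"
    using K(3) by (simp add: card_image)
  moreover have "x ` K \<subseteq> A \<inter> M"
    using x K(2) dissecting_level_subset[OF ds] by blast
  ultimately show "enat j \<le> Ncount A M"
    unfolding Ncount_ge using K(1) by blast
qed

lemma sigma_algebra_HH: "sigma_algebra (Csets S) (HH S T)"
  unfolding HH_def by (rule sigma_algebra_sigma_sets) auto

lemma generator_in_HH: "A \<in> T \<Longrightarrow> {M \<in> Csets S. Ncount A M \<noteq> 0} \<in> HH S T"
  unfolding HH_def by blast

lemma HH_subset_CC: "HH S T \<subseteq> CC S T"
  unfolding HH_def CC_def
proof (rule sigma_sets_subseteq, safe)
  fix A assume "A \<in> T"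
  then show "\<exists>A' B. {M \<in> Csets S. Ncount A M \<noteq> 0} = {M \<in> Csets S. Ncount A' M \<in> B} \<and> A' \<in> T"
    by (intro exI[of _ A] exI[of _ "- {0}"]) auto
qed

lemma CC_subset_HH_if_level_sets:
  assumes "\<And>A j. A \<in> T \<Longrightarrow> {M \<in> Csets S. enat j \<le> Ncount A M} \<in> HH S T"
  shows "CC S T \<subseteq> HH S T"
proof -
  interpret H: sigma_algebra "Csets S" "HH S T" by (rule sigma_algebra_HH)
  show ?thesis
    unfolding CC_def
    using assms by (auto intro!: H.sigma_sets_subset H.enat_preimage_from_level_sets)
qed

text \<open>For a self-dissecting family the level sets are countable unions of finite
  intersections of generators of H(E).\<close>
lemma self_dissecting_level_set_in_HH:
  assumes "self_dissecting E" "A \<in> E"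
  shows "{M \<in> Csets S. enat j \<le> Ncount A M} \<in> HH S E"
proof -
  interpret H: sigma_algebra "Csets S" "HH S E" by (rule sigma_algebra_HH)
  obtain I D where ds: "dissecting_system A I D" and DE: "\<And>n k. k \<in> I n \<Longrightarrow> D n k \<in> E"
    using assms unfolding self_dissecting_def by blast
  define cells where "cells n = {K. finite K \<and> K \<subseteq> I n \<and> card K = j}" for n
  define hits where "hits n K = {M \<in> Csets S. \<forall>k\<in>K. Ncount (D n k) M \<noteq> 0}" for n K
  have hits_in: "hits n K \<in> HH S E" if "K \<in> cells n" for n K
  proof (cases "K = {}")
    case False
    have "hits n K = (\<Inter>k\<in>K. {M \<in> Csets S. Ncount (D n k) M \<noteq> 0})"
      using False unfolding hits_def by auto
    also have "\<dots> \<in> HH S E"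
      using that False unfolding cells_def by (intro H.finite_INT generator_in_HH DE) auto
    finally show ?thesis .
  qed (simp add: hits_def)
  have "countable (cells n)" for n
    unfolding cells_def by (rule countable_subset[OF _ countable_Collect_finite]) auto
  then have "(\<Union>n. \<Union>K\<in>cells n. hits n K) \<in> HH S E"
    using hits_in by blast
  moreover have "{M \<in> Csets S. enat j \<le> Ncount A M} = (\<Union>n. \<Union>K\<in>cells n. hits n K)"
    unfolding cells_def hits_def dissecting_Ncount_ge[OF ds] by blast
  ultimately show ?thesis by simp
qed

text \<open>Main theorem.\<close>
theorem theorem3p1:
  fixes S :: "'a set" and E :: "'a set set"
  assumes "E \<subseteq> Pow S"
    and "self_dissecting E"
  shows "HH S E = CC S E"
proof
  show "HH S E \<subseteq> CC S E" by (rule HH_subset_CC)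
  show "CC S E \<subseteq> HH S E"
    using self_dissecting_level_set_in_HH[OF assms(2)] by (rule CC_subset_HH_if_level_sets)
qed

end
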